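(* Let $n$ be even, let $\mathbf{X}=\{X_{rj}:r,j=1,\dots,n\}$ be the switch variables of the standard lightbulb process with $X_j=(\sum_{r=1}^nX_{rj})\bmod 2$, and for $i\in\{1,\dots,n\}$ construct $\mathbf{X}^i$ as follows: let $J^i$ have conditional distribution, given $\mathbf{X}$, uniform on $\{j:X_{n/2,j}=1-X_{n/2,i}\}$; if $X_i=1$ set $\mathbf{X}^i=\mathbf{X}$; otherwise let $\mathbf{X}^i$ equal $\mathbf{X}$ except that the values of $X_{n/2,i}$ and $X_{n/2,J^i}$ are interchanged. Then for all $i=1,\dots,n$, $\mathcal{L}(\mathbf{X}^i)=\mathcal{L}(\mathbf{X}\mid X_i=1)$.
   Context: Standard lightbulb process: $n$ bulbs, all initially off, $n$ stages; at stage $r=1,\dots,n$ a uniformly random subset of exactly $r$ bulbs is toggled, independently across stages. The switch variable $X_{rj}\in\{0,1\}$ is $1$ iff bulb $j$ is toggled at stage $r$; thus $P(X_{rj}=e_{rj}\ \forall r,j)=\prod_{r=1}^n\binom{n}{r}^{-1}$ if $\sum_je_{rj}=r$ for all $r$, and $0$ otherwise. $\mathcal{L}(\cdot)$ denotes the law (distribution). *)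

theory Defs
  imports "HOL-Probability.Probability"
begin

text \<open>A realisation of the switch variables is encoded as a function
  S :: nat \<Rightarrow> nat set, where S r is the set of bulbs toggled at stage r,
  i.e. X_{rj} = 1 iff j \<in> S r.  Bulbs and stages are indexed by {1..n}.\<close>

definition lightbulb_switches :: "nat \<Rightarrow> (nat \<Rightarrow> nat set) pmf" where
  "lightbulb_switches n =
     Pi_pmf {1..n} {} (\<lambda>r. pmf_of_set {A. A \<subseteq> {1..n} \<and> card A = r})"

definition bulb_on :: "nat \<Rightarrow> (nat \<Rightarrow> nat set) \<Rightarrow> nat \<Rightarrow> bool" where
  "bulb_on n S j \<longleftrightarrow> odd (card {r \<in> {1..n}. j \<in> S r})"

definition interchange :: "nat \<Rightarrow> nat \<Rightarrow> nat \<Rightarrow> (nat \<Rightarrow> nat set) \<Rightarrow> (nat \<Rightarrow> nat set)" where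
  "interchange m i j S =
     S(m := {k. if k = i then j \<in> S m else if k = j then i \<in> S m else k \<in> S m})"

text \<open>The coupled configuration X^i (jointly constructed with X; we return its law).\<close>
definition switched_config :: "nat \<Rightarrow> nat \<Rightarrow> (nat \<Rightarrow> nat set) \<Rightarrow> (nat \<Rightarrow> nat set) pmf" where
  "switched_config n i S =
     (if bulb_on n S i then return_pmf S
      else do {
        J \<leftarrow> pmf_of_set {j \<in> {1..n}. (j \<in> S (n div 2)) \<noteq> (i \<in> S (n div 2))};
        return_pmf (interchange (n div 2) i J S)
      })"

end

theory Submission
  imports Defs
begin

text \<open>Write \<open>m = n/2\<close> and \<open>\<Omega>\<close> for the set of configurations, on which \<open>X\<close> is uniform.
  A bulb \<open>j\<close> is opposite to \<open>i\<close> in \<open>S\<close> if stage \<open>m\<close> toggles exactly one of them; since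
  stage \<open>m\<close> toggles exactly \<open>n/2\<close> of the \<open>n\<close> bulbs, there are always exactly \<open>n/2\<close> such \<open>j\<close>.
  Interchanging \<open>i\<close> with an opposite \<open>j\<close> in stage \<open>m\<close> is an involution which preserves \<open>\<Omega>\<close>
  and the oppositeness of \<open>j\<close>, and flips bulb \<open>i\<close>.  Hence a configuration \<open>s\<close> with bulb \<open>i\<close>
  on receives mass \<open>1/|\<Omega>|\<close> from itself and \<open>1/(m |\<Omega>|)\<close> from each of the \<open>m\<close>
  configurations obtained from it by such an interchange, \<open>2/|\<Omega>|\<close> in total, and all other
  configurations receive nothing.  So \<open>X\<^sup>i\<close> is uniform on the configurations with bulb \<open>i\<close>
  on, which is also the conditional law of \<open>X\<close>.\<close>

lemma cond_pmf_of_set: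
  assumes "finite A" "A \<inter> E \<noteq> {}"
  shows "cond_pmf (pmf_of_set A) E = pmf_of_set (A \<inter> E)"
proof (rule pmf_eqI)
  have A: "A \<noteq> {}" using assms(2) by blast
  then have "set_pmf (pmf_of_set A) \<inter> E \<noteq> {}" using assms by simp
  moreover have "card (A \<inter> E) > 0" using assms by (simp add: card_gt_0_iff)
  ultimately show "pmf (cond_pmf (pmf_of_set A) E) x = pmf (pmf_of_set (A \<inter> E)) x" for x
    using assms A by (simp add: pmf_cond measure_pmf_of_set indicator_def)
qed

lemma pmf_of_set_if_pmf_proportional:
  assumes "finite A" and pmf_p: "\<And>x. pmf p x = c * indicator A x"
  shows "A \<noteq> {}" and "p = pmf_of_set A"
proof -
  have supp: "set_pmf p \<subseteq> A" using pmf_p by (auto simp: set_pmf_eq indicator_def)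
  then show A: "A \<noteq> {}" using set_pmf_not_empty[of p] by blast
  have "card A * c = 1"
    using sum_pmf_eq_1[OF assms(1) supp] by (simp add: pmf_p sum_distrib_left[symmetric])
  then show "p = pmf_of_set A"
    using assms(1) A by (intro pmf_eqI) (simp add: pmf_p field_simps)
qed

definition switch_configs :: "nat \<Rightarrow> (nat \<Rightarrow> nat set) set" where
  "switch_configs n = PiE_dflt {1..n} {} (\<lambda>r. {A. A \<subseteq> {1..n} \<and> card A = r})"

lemma switch_configs_iff:
  "S \<in> switch_configs n \<longleftrightarrow>
     (\<forall>r \<in> {1..n}. S r \<subseteq> {1..n} \<and> card (S r) = r) \<and> (\<forall>r. r \<notin> {1..n} \<longrightarrow> S r = {})"
  by (auto simp: switch_configs_def PiE_dflt_def)

lemma finite_switch_configs: "finite (switch_configs n)"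
  unfolding switch_configs_def by (rule finite_PiE_dflt) auto

lemma subsets_of_card_nonempty:
  assumes "r \<le> n"
  shows "{A. A \<subseteq> {1..n} \<and> card A = r} \<noteq> {}"
proof -
  have "{1..r} \<subseteq> {1..n} \<and> card {1..r} = r" using assms by auto
  then show ?thesis by blast
qed

lemma switch_configs_nonempty: "switch_configs n \<noteq> {}"
  using subsets_of_card_nonempty by (auto simp: switch_configs_def)

lemma lightbulb_switches_eq_pmf_of_set:
  "lightbulb_switches n = pmf_of_set (switch_configs n)"
  unfolding lightbulb_switches_def switch_configs_def
  using subsets_of_card_nonempty by (intro Pi_pmf_of_set) auto

definition opposite_bulbs :: "nat \<Rightarrow> nat \<Rightarrow> nat \<Rightarrow> (nat \<Rightarrow> nat set) \<Rightarrow> nat set" where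
  "opposite_bulbs n m i S = {j \<in> {1..n}. (j \<in> S m) \<noteq> (i \<in> S m)}"

lemma interchange_interchange [simp]: "interchange m i j (interchange m i j S) = S"
  by (auto simp: interchange_def fun_eq_iff)

lemma interchange_commute: "interchange m i j = interchange m j i"
  by (auto simp: interchange_def fun_eq_iff)

lemma interchange_other_stage [simp]: "r \<noteq> m \<Longrightarrow> interchange m i j S r = S r"
  by (simp add: interchange_def)

lemma interchange_stage:
  assumes "i \<in> S m" "j \<notin> S m"
  shows "interchange m i j S m = insert j (S m - {i})"
  using assms by (auto simp: interchange_def)

lemma opposite_bulbs_interchange:
  "j \<in> opposite_bulbs n m i S \<Longrightarrow> j \<in> opposite_bulbs n m i (interchange m i j S)"
  by (auto simp: opposite_bulbs_def interchange_def)

lemma card_opposite_bulbs: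
  assumes "S m \<subseteq> {1..n}" "i \<in> {1..n}"
  shows "card (opposite_bulbs n m i S) = (if i \<in> S m then n - card (S m) else card (S m))"
proof -
  have "opposite_bulbs n m i S = (if i \<in> S m then {1..n} - S m else S m)"
    using assms by (auto simp: opposite_bulbs_def)
  then show ?thesis using assms(1) by (simp add: card_Diff_subset finite_subset)
qed

lemma interchange_in_switch_configs:
  assumes S: "S \<in> switch_configs n" and "m \<in> {1..n}" "i \<in> {1..n}"
    and j: "j \<in> opposite_bulbs n m i S"
  shows "interchange m i j S \<in> switch_configs n"
proof -
  have Sm: "S m \<subseteq> {1..n}" "card (S m) = m" using S assms(2) by (auto simp: switch_configs_iff)
  have "interchange m i j S m \<subseteq> {1..n} \<and> card (interchange m i j S m) = m"
  proof (cases "i \<in> S m")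
    case True
    then show ?thesis
      using j Sm assms(2,3) interchange_stage[of i S m j] finite_subset[OF Sm(1)]
      by (auto simp: opposite_bulbs_def card_insert_if)
  next
    case False
    then show ?thesis
      using j Sm assms(2,3) interchange_stage[of j S m i] finite_subset[OF Sm(1)]
      by (auto simp: opposite_bulbs_def card_insert_if interchange_commute)
  qed
  moreover have "interchange m i j S r = S r" if "r \<noteq> m" for r
    using that by simp
  ultimately show ?thesis
    using S assms(2) unfolding switch_configs_iff by (metis (no_types, lifting))
qed

lemma odd_card_toggle:
  assumes "finite R" "R' - {m} = R - {m}" "(m \<in> R') \<noteq> (m \<in> R)"
  shows "odd (card R') \<longleftrightarrow> \<not> odd (card R)"
proof -
  have "finite R'" using assms(1,2) by (metis finite_Diff2 finite.emptyI finite.insertI)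
  show ?thesis
  proof (cases "m \<in> R")
    case True
    then have "R = insert m R'" "m \<notin> R'" using assms(2,3) by auto
    then show ?thesis using \<open>finite R'\<close> by simp
  next
    case False
    then have "R' = insert m R" using assms(2,3) by auto
    then show ?thesis using assms(1) False by simp
  qed
qed

lemma bulb_on_interchange:
  assumes "m \<in> {1..n}" "(j \<in> S m) \<noteq> (i \<in> S m)"
  shows "bulb_on n (interchange m i j S) i \<longleftrightarrow> \<not> bulb_on n S i"
  unfolding bulb_on_def
  using assms by (intro odd_card_toggle) (auto simp: interchange_def)

lemma interchange_opposite_bulb:
  assumes "S \<in> switch_configs n" "m \<in> {1..n}" "i \<in> {1..n}" "j \<in> opposite_bulbs n m i S"
  shows "interchange m i j S \<in> switch_configs n"
    and "j \<in> opposite_bulbs n m i (interchange m i j S)"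
    and "bulb_on n (interchange m i j S) i \<longleftrightarrow> \<not> bulb_on n S i"
  using assms interchange_in_switch_configs opposite_bulbs_interchange bulb_on_interchange
  by (auto simp: opposite_bulbs_def)

lemma card_opposite_bulbs_half:
  assumes "even n" "S \<in> switch_configs n" "i \<in> {1..n}"
  shows "card (opposite_bulbs n (n div 2) i S) = n div 2"
proof -
  have "n div 2 \<in> {1..n}" using assms by auto
  then have "S (n div 2) \<subseteq> {1..n}" "card (S (n div 2)) = n div 2"
    using assms(2) by (auto simp: switch_configs_iff)
  moreover have "n - n div 2 = n div 2" using assms(1) by auto
  ultimately show ?thesis using assms(3) card_opposite_bulbs by simp
qed

lemma interchange_preimage:
  assumes "m \<in> {1..n}" "i \<in> {1..n}"
  shows "{S \<in> switch_configs n - {S. bulb_on n S i}.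
            j \<in> opposite_bulbs n m i S \<and> interchange m i j S = s}
       = (if s \<in> switch_configs n \<inter> {S. bulb_on n S i} \<and> j \<in> opposite_bulbs n m i s
          then {interchange m i j s} else {})"
proof (cases "s \<in> switch_configs n \<inter> {S. bulb_on n S i} \<and> j \<in> opposite_bulbs n m i s")
  case True
  then have "interchange m i j s \<in> switch_configs n - {S. bulb_on n S i}"
    "j \<in> opposite_bulbs n m i (interchange m i j s)"
    using assms interchange_opposite_bulb[of s n m i j] by auto
  then show ?thesis using True by auto
next
  case False
  then show ?thesis using assms interchange_opposite_bulb[of _ n m i j] by auto
qed

lemma pmf_switched_config_off:
  assumes "even n" "i \<in> {1..n}" "S \<in> switch_configs n" "\<not> bulb_on n S i"
  shows "pmf (switched_config n i S) s =
    (\<Sum>j\<in>{1..n}. of_bool (j \<in> opposite_bulbs n (n div 2) i S \<and> interchange (n div 2) i j S = s))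
      / real (n div 2)"
proof -
  let ?D = "opposite_bulbs n (n div 2) i S"
  have card: "card ?D = n div 2" using assms card_opposite_bulbs_half by blast
  then have "?D \<noteq> {}" using assms(1,2) by auto
  moreover have D: "finite ?D" "?D \<subseteq> {1..n}" by (auto simp: opposite_bulbs_def)
  moreover have "switched_config n i S = pmf_of_set ?D \<bind> (\<lambda>j. return_pmf (interchange (n div 2) i j S))"
    using assms(4) by (simp add: switched_config_def opposite_bulbs_def)
  ultimately have "pmf (switched_config n i S) s
      = (\<Sum>j\<in>?D. indicator {s} (interchange (n div 2) i j S)) / card ?D"
    by (simp add: pmf_bind_pmf_of_set)
  also have "(\<Sum>j\<in>?D. indicator {s} (interchange (n div 2) i j S))
      = (\<Sum>j\<in>{1..n}. of_bool (j \<in> ?D \<and> interchange (n div 2) i j S = s) :: real)"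
    using D by (intro sum.mono_neutral_cong_left) (auto simp: indicator_def)
  finally show ?thesis by (simp only: card)
qed

lemma sum_pmf_switched_config_on:
  "(\<Sum>S\<in>switch_configs n \<inter> {S. bulb_on n S i}. pmf (switched_config n i S) s)
     = indicator (switch_configs n \<inter> {S. bulb_on n S i}) s"
proof -
  have "(\<Sum>S\<in>switch_configs n \<inter> {S. bulb_on n S i}. pmf (switched_config n i S) s)
      = (\<Sum>S\<in>switch_configs n \<inter> {S. bulb_on n S i}. if S = s then 1 else 0)"
    by (intro sum.cong) (auto simp: switched_config_def)
  then show ?thesis by (simp add: finite_switch_configs)
qed

lemma sum_pmf_switched_config_off:
  assumes "even n" "i \<in> {1..n}"
  shows "(\<Sum>S\<in>switch_configs n - {S. bulb_on n S i}. pmf (switched_config n i S) s)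
           = indicator (switch_configs n \<inter> {S. bulb_on n S i}) s"
proof -
  let ?\<Omega> = "switch_configs n" and ?E = "{S. bulb_on n S i}" and ?m = "n div 2"
  let ?D = "opposite_bulbs n ?m i"
  have m: "?m \<in> {1..n}" using assms by auto
  have preimage: "(\<Sum>S\<in>?\<Omega> - ?E. of_bool (j \<in> ?D S \<and> interchange ?m i j S = s))
      = (of_bool (s \<in> ?\<Omega> \<inter> ?E \<and> j \<in> ?D s) :: real)" for j
  proof -
    have "(\<Sum>S\<in>?\<Omega> - ?E. of_bool (j \<in> ?D S \<and> interchange ?m i j S = s))
        = real (card ((?\<Omega> - ?E) \<inter> {S. j \<in> ?D S \<and> interchange ?m i j S = s}))"
      using finite_switch_configs by (simp only: sum_of_bool_eq finite_Diff)
    also have "(?\<Omega> - ?E) \<inter> {S. j \<in> ?D S \<and> interchange ?m i j S = s}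
        = {S \<in> ?\<Omega> - ?E. j \<in> ?D S \<and> interchange ?m i j S = s}" by blast
    finally show ?thesis
      unfolding interchange_preimage[OF m assms(2)] by simp
  qed
  have "(\<Sum>S\<in>?\<Omega> - ?E. pmf (switched_config n i S) s)
      = (\<Sum>S\<in>?\<Omega> - ?E. (\<Sum>j\<in>{1..n}. of_bool (j \<in> ?D S \<and> interchange ?m i j S = s))
          / real ?m)"
    using assms by (intro sum.cong refl pmf_switched_config_off) auto
  also have "\<dots> = (\<Sum>j\<in>{1..n}. \<Sum>S\<in>?\<Omega> - ?E. of_bool (j \<in> ?D S \<and> interchange ?m i j S = s))
          / real ?m"
    unfolding sum_divide_distrib[symmetric] sum.swap[of _ "?\<Omega> - ?E" "{1..n}"] ..
  also have "\<dots> = (\<Sum>j\<in>{1..n}. of_bool (s \<in> ?\<Omega> \<inter> ?E \<and> j \<in> ?D s)) / real ?m"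
    unfolding preimage ..
  also have "\<dots> = indicator (?\<Omega> \<inter> ?E) s"
  proof (cases "s \<in> ?\<Omega> \<inter> ?E")
    case True
    have "?D s \<subseteq> {1..n}" by (auto simp: opposite_bulbs_def)
    then have "(\<Sum>j\<in>{1..n}. of_bool (j \<in> ?D s)) = real (card (?D s))"
      by (simp add: Int_absorb1 Int_commute)
    then show ?thesis
      using True assms card_opposite_bulbs_half[of n s i] m by simp
  next
    case False
    then show ?thesis by (simp del: Int_iff)
  qed
  finally show ?thesis .
qed

lemma sum_pmf_switched_config:
  assumes "even n" "i \<in> {1..n}"
  shows "(\<Sum>S\<in>switch_configs n. pmf (switched_config n i S) s)
           = 2 * indicator (switch_configs n \<inter> {S. bulb_on n S i}) s"
  using sum.Int_Diff[OF finite_switch_configs, of "\<lambda>S. pmf (switched_config n i S) s" n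
      "{S. bulb_on n S i}"]
  unfolding sum_pmf_switched_config_on sum_pmf_switched_config_off[OF assms] by simp

theorem lemma3p2:
  fixes n i :: nat
  assumes "even n" and "i \<in> {1..n}"
  shows "bind_pmf (lightbulb_switches n) (switched_config n i)
           = cond_pmf (lightbulb_switches n) {S. bulb_on n S i}"
proof -
  let ?\<Omega> = "switch_configs n" and ?E = "{S. bulb_on n S i}"
  let ?X\<^sub>i = "bind_pmf (lightbulb_switches n) (switched_config n i)"
  have "pmf ?X\<^sub>i s = 2 / card ?\<Omega> * indicator (?\<Omega> \<inter> ?E) s" for s
    using sum_pmf_switched_config[OF assms]
    by (simp add: lightbulb_switches_eq_pmf_of_set pmf_bind_pmf_of_set
        switch_configs_nonempty finite_switch_configs)
  moreover have "finite (?\<Omega> \<inter> ?E)" by (simp add: finite_switch_configs)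
  ultimately have "?\<Omega> \<inter> ?E \<noteq> {}" "?X\<^sub>i = pmf_of_set (?\<Omega> \<inter> ?E)"
    using pmf_of_set_if_pmf_proportional by blast+
  then show ?thesis
    by (simp add: lightbulb_switches_eq_pmf_of_set cond_pmf_of_set finite_switch_configs)
qed

end
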